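(* Let $R>0$, $S^2(R)=\{y\in\mathbb{R}^3:|y|=R\}$, and fix $x\in\mathbb{R}^3$ with $r=|x|$, $0<r\neq R$. For every real $b\neq0$, $$\int_{S^2(R)}\omega(x,y)^{1+ib}\,dS_y=\frac{2\pi R}{r}\cdot\frac{|R^2-r^2|}{b}\cdot\sin\!\left(b\ln\frac{R+r}{|R-r|}\right),$$ and $$\int_{S^2(R)}\omega(x,y)\,dS_y=\frac{2\pi R}{r}\cdot|R^2-r^2|\cdot\ln\frac{R+r}{|R-r|}.$$
   Context: For $x\neq y$, $\omega(x,y)=\left|\dfrac{|x|^2-|y|^2}{|x-y|^2}\right|$; $dS_y$ is the surface measure on $S^2(R)$; $\omega^{1+ib}=e^{(1+ib)\ln\omega}$. *)

theory Defs
  imports "HOL-Analysis.Analysis"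
begin

definition omega :: "real^3 \<Rightarrow> real^3 \<Rightarrow> real" where
  "omega x y = \<bar>(norm x ^ 2 - norm y ^ 2) / (norm (x - y) ^ 2)\<bar>"

definition omega_cpow :: "real \<Rightarrow> real^3 \<Rightarrow> real^3 \<Rightarrow> complex" where
  "omega_cpow b x y = exp (Complex 1 b * of_real (ln (omega x y)))"

definition sph :: "real \<Rightarrow> real \<times> real \<Rightarrow> real^3" where
  "sph R p = vector [R * sin (fst p) * cos (snd p), R * sin (fst p) * sin (snd p), R * cos (fst p)]"

text \<open>Surface integral over S^2(R) w.r.t. the surface measure dS, expressed via the
  standard parametrization, with area element R^2 sin(theta) dtheta dphi.\<close>
definition has_sphere_integral ::
  "(real^3 \<Rightarrow> 'a::euclidean_space) \<Rightarrow> 'a \<Rightarrow> real \<Rightarrow> bool" where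
  "has_sphere_integral f I R \<longleftrightarrow>
     ((\<lambda>p. (R^2 * sin (fst p)) *\<^sub>R f (sph R p)) has_integral I) (cbox (0, 0) (pi, 2 * pi))"

end

theory Submission
  imports Defs
begin

text \<open>Writing \<open>y = R \<eta>\<close> with \<open>|\<eta>| = 1\<close>, the kernel depends on \<open>y\<close> only through \<open>c = x \<bullet> \<eta>\<close>,
  namely \<open>\<omega>(x,y) = |R\<^sup>2 - r\<^sup>2| / (r\<^sup>2 + R\<^sup>2 - 2Rc)\<close>. For every \<open>C\<^sup>1\<close> profile \<open>F\<close> on \<open>[-r,r]\<close>
  the parametrised integral of \<open>F(x \<bullet> \<eta>)\<close> does not change when \<open>x\<close> is rotated: its derivative
  along either spherical angle of \<open>x\<close> is the integral of a divergence of a field that is periodic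
  on the parameter box, hence zero. Moving \<open>x\<close> to the pole \<open>(0,0,r)\<close> gives Archimedes' formula
  \<open>(2\<pi>R\<^sup>2/r) \<integral> F\<close>, the integral taken over \<open>[-r,r]\<close>. Both integrands have elementary
  primitives in \<open>c\<close>: a logarithm for the exponent \<open>1\<close>, and \<open>(r\<^sup>2 + R\<^sup>2 - 2Rc) \<omega>^(1+ib) / (2iRb)\<close>
  for \<open>b \<noteq> 0\<close>.\<close>

lemma integral_box_divergence_eq_0:
  fixes P Q P' Q' :: "real \<Rightarrow> real \<Rightarrow> 'a::euclidean_space"
  assumes "0 \<le> a" "0 \<le> b"
    and cont_P': "continuous_on (cbox (0,0) (a,b)) (\<lambda>(t,u). P' t u)"
    and cont_Q': "continuous_on (cbox (0,0) (a,b)) (\<lambda>(t,u). Q' t u)"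
    and deriv_P: "\<And>t u. t \<in> {0..a} \<Longrightarrow> u \<in> {0..b} \<Longrightarrow>
      ((\<lambda>t. P t u) has_vector_derivative P' t u) (at t within {0..a})"
    and deriv_Q: "\<And>t u. t \<in> {0..a} \<Longrightarrow> u \<in> {0..b} \<Longrightarrow>
      ((\<lambda>u. Q t u) has_vector_derivative Q' t u) (at u within {0..b})"
    and periodic_P: "\<And>u. u \<in> {0..b} \<Longrightarrow> P a u = P 0 u"
    and periodic_Q: "\<And>t. t \<in> {0..a} \<Longrightarrow> Q t b = Q t 0"
  shows "integral (cbox (0,0) (a,b)) (\<lambda>(t,u). P' t u + Q' t u) = 0"
proof -
  let ?B = "cbox (0::real,0::real) (a,b)"
  have "integral ?B (\<lambda>(t,u). P' t u) = integral (cbox 0 b) (\<lambda>u. integral (cbox 0 a) (\<lambda>t. P' t u))"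
    using integral_prod_continuous[OF cont_P'] integral_swap_continuous[OF cont_P'] by simp
  also have "\<dots> = integral (cbox 0 b) (\<lambda>u. 0)"
  proof (rule integral_cong)
    fix u assume u: "u \<in> cbox 0 b"
    have "((\<lambda>t. P' t u) has_integral (P a u - P 0 u)) {0..a}"
      by (rule fundamental_theorem_of_calculus) (use u deriv_P \<open>0 \<le> a\<close> in auto)
    then show "integral (cbox 0 a) (\<lambda>t. P' t u) = 0"
      using periodic_P u by (simp add: integral_unique)
  qed
  finally have P'_0: "integral ?B (\<lambda>(t,u). P' t u) = 0" by simp
  have "integral ?B (\<lambda>(t,u). Q' t u) = integral (cbox 0 a) (\<lambda>t. integral (cbox 0 b) (\<lambda>u. Q' t u))"
    using integral_prod_continuous[OF cont_Q'] by simp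
  also have "\<dots> = integral (cbox 0 a) (\<lambda>t. 0)"
  proof (rule integral_cong)
    fix t assume t: "t \<in> cbox 0 a"
    have "((\<lambda>u. Q' t u) has_integral (Q t b - Q t 0)) {0..b}"
      by (rule fundamental_theorem_of_calculus) (use t deriv_Q \<open>0 \<le> b\<close> in auto)
    then show "integral (cbox 0 b) (\<lambda>u. Q' t u) = 0"
      using periodic_Q t by (simp add: integral_unique)
  qed
  finally have Q'_0: "integral ?B (\<lambda>(t,u). Q' t u) = 0" by simp
  show ?thesis
    using integral_add[OF integrable_continuous[OF cont_P'] integrable_continuous[OF cont_Q']] P'_0 Q'_0
    by (simp add: split_def)
qed

text \<open>Keeping the three coordinates of \<open>a\<close> as real parameters lets us differentiate along
  rotations of \<open>a\<close>.\<close>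
definition sph_inner :: "real \<Rightarrow> real \<Rightarrow> real \<Rightarrow> real \<Rightarrow> real \<Rightarrow> real" where
  "sph_inner a1 a2 a3 t u = a1 * sin t * cos u + a2 * sin t * sin u + a3 * cos t"

lemma inner_sph1: "inner x (sph 1 p) = sph_inner (x$1) (x$2) (x$3) (fst p) (snd p)"
  unfolding inner_vec_def sum_3 sph_def sph_inner_def by (simp add: algebra_simps)

lemma spherical_coordinates_sum_squares:
  "(r * sin t * cos u)^2 + (r * sin t * sin u)^2 + (r * cos t)^2 = (r::real)^2"
proof -
  have cos2: "(cos u)^2 = 1 - (sin u)^2" "(cos t)^2 = 1 - (sin t)^2" by (simp_all add: cos_squared_eq)
  show ?thesis by (simp add: power_mult_distrib cos2 algebra_simps)
qed

lemma Cauchy_Schwarz_3: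
  "(x1 * y1 + x2 * y2 + x3 * y3)^2 \<le> (x1^2 + x2^2 + x3^2) * (y1^2 + y2^2 + (y3::real)^2)"
proof -
  have "(x1^2 + x2^2 + x3^2) * (y1^2 + y2^2 + y3^2) - (x1 * y1 + x2 * y2 + x3 * y3)^2
     = (x1 * y2 - x2 * y1)^2 + (x1 * y3 - x3 * y1)^2 + (x2 * y3 - x3 * y2)^2"
    by algebra
  then show ?thesis by (smt (verit) zero_le_power2)
qed

lemma sph_inner_bounded:
  assumes "a1^2 + a2^2 + a3^2 = r^2" "0 \<le> r"
  shows "sph_inner a1 a2 a3 t u \<in> {-r..r}"
proof -
  have "(sph_inner a1 a2 a3 t u)^2
      \<le> (a1^2 + a2^2 + a3^2) * ((sin t * cos u)^2 + (sin t * sin u)^2 + (cos t)^2)"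
    using Cauchy_Schwarz_3[of a1 "sin t * cos u" a2 "sin t * sin u" a3 "cos t"]
    unfolding sph_inner_def by (simp add: mult.assoc)
  also have "\<dots> = r^2"
    using spherical_coordinates_sum_squares[of 1 t u] assms(1) by (simp add: mult.commute)
  finally have "\<bar>sph_inner a1 a2 a3 t u\<bar> \<le> r"
    using assms(2) power2_le_iff_abs_le by blast
  then show ?thesis by auto
qed

lemma continuous_on_sph_inner: "continuous_on S (\<lambda>p. sph_inner a1 a2 a3 (fst p) (snd p))"
  unfolding sph_inner_def by (intro continuous_intros)

lemma sph_inner_polar_axis: "sph_inner 0 0 r t u = r * cos t"
  by (simp add: sph_inner_def)

lemma spherical_coordinates_exist:
  fixes a1 a2 a3 r :: real
  assumes "a1^2 + a2^2 + a3^2 = r^2" "r > 0"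
  obtains \<alpha> \<beta> where "a1 = r * sin \<alpha> * cos \<beta>" "a2 = r * sin \<alpha> * sin \<beta>" "a3 = r * cos \<alpha>"
proof -
  define \<rho> where "\<rho> = sqrt (a1^2 + a2^2)"
  have \<rho>2: "\<rho>^2 = a1^2 + a2^2" unfolding \<rho>_def by simp
  have "(a3/r)^2 + (\<rho>/r)^2 = 1" using assms \<rho>2 by (simp add: power_divide field_simps)
  then obtain \<alpha> where \<alpha>: "a3/r = cos \<alpha>" "\<rho>/r = sin \<alpha>" by (rule sincos_total_2pi) auto
  have a3: "a3 = r * cos \<alpha>" and \<rho>: "r * sin \<alpha> = \<rho>" using \<alpha> assms(2) by (simp_all add: field_simps)
  show thesis
  proof (cases "\<rho> = 0")
    case True
    then have "a1 = 0" "a2 = 0" using \<rho>2 by (simp_all add: power2_eq_square)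
    then show ?thesis using that[of \<alpha> 0] True \<rho> a3 by auto
  next
    case False
    moreover have "\<rho> \<ge> 0" unfolding \<rho>_def by simp
    ultimately have "\<rho> > 0" by simp
    have "(a1/\<rho>)^2 + (a2/\<rho>)^2 = (a1^2 + a2^2) / \<rho>^2"
      by (simp add: power_divide add_divide_distrib)
    also have "\<dots> = 1" unfolding \<rho>2[symmetric] using \<open>\<rho> > 0\<close> by simp
    finally have "(a1/\<rho>)^2 + (a2/\<rho>)^2 = 1" .
    then obtain \<beta> where "a1/\<rho> = cos \<beta>" "a2/\<rho> = sin \<beta>" by (rule sincos_total_2pi) auto
    then show ?thesis using that[of \<alpha> \<beta>] \<open>\<rho> > 0\<close> \<rho> a3 by (simp add: field_simps)
  qed
qed

lemma has_integral_sin_mult_comp_cos: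
  fixes F G :: "real \<Rightarrow> 'a::banach"
  assumes r: "r > 0"
    and G: "\<And>c. c \<in> {-r..r} \<Longrightarrow> (G has_vector_derivative F c) (at c within {-r..r})"
  shows "((\<lambda>t. sin t *\<^sub>R F (r * cos t)) has_integral ((1/r) *\<^sub>R (G r - G (-r)))) {0..pi}"
proof -
  have "((\<lambda>t. sin t *\<^sub>R F (r * cos t)) has_integral ((-1/r) *\<^sub>R G (r * cos pi) - (-1/r) *\<^sub>R G (r * cos 0))) {0..pi}"
  proof (rule fundamental_theorem_of_calculus[where f="\<lambda>t. (-1/r) *\<^sub>R G (r * cos t)"])
    fix t assume "t \<in> {0..pi}"
    have r_cos: "r * cos t' \<in> {-r..r}" for t'
      using mult_left_mono[OF cos_ge_minus_one, of r t'] mult_left_mono[OF cos_le_one, of r t'] r by simp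
    have g: "((\<lambda>t. r * cos t) has_vector_derivative (- r * sin t)) (at t within {0..pi})"
      unfolding has_real_derivative_iff_has_vector_derivative[symmetric]
      by (auto intro!: derivative_eq_intros)
    have "(G has_vector_derivative F (r * cos t)) (at (r * cos t) within (\<lambda>t. r * cos t) ` {0..pi})"
      by (rule has_vector_derivative_within_subset[OF G[OF r_cos]]) (use r_cos in auto)
    from vector_diff_chain_within[OF g this]
    have "((\<lambda>t. G (r * cos t)) has_vector_derivative ((- r * sin t) *\<^sub>R F (r * cos t))) (at t within {0..pi})"
      by (simp add: o_def)
    from has_vector_derivative_scaleR[OF DERIV_const this, of "-1/r"] r
    show "((\<lambda>t. (-1/r) *\<^sub>R G (r * cos t)) has_vector_derivative sin t *\<^sub>R F (r * cos t)) (at t within {0..pi})"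
      by simp
  qed simp
  then show ?thesis by (simp add: algebra_simps)
qed

context
  fixes F F' :: "real \<Rightarrow> 'a::euclidean_space" and r :: real
  assumes r_pos: "r > 0"
    and deriv_F: "\<And>c. c \<in> {-r..r} \<Longrightarrow> (F has_vector_derivative F' c) (at c)"
    and cont_F': "continuous_on {-r..r} F'"
begin

lemma continuous_on_F_comp:
  "continuous_on S g \<Longrightarrow> (\<And>x. x \<in> S \<Longrightarrow> g x \<in> {-r..r}) \<Longrightarrow> continuous_on S (\<lambda>x. F (g x))"
proof (rule continuous_on_compose2[of "{-r..r}"])
  show "continuous_on {-r..r} F"
    using deriv_F has_vector_derivative_continuous continuous_at_imp_continuous_on by blast
qed auto

lemma continuous_on_F'_comp:
  "continuous_on S g \<Longrightarrow> (\<And>x. x \<in> S \<Longrightarrow> g x \<in> {-r..r}) \<Longrightarrow> continuous_on S (\<lambda>x. F' (g x))"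
  by (rule continuous_on_compose2[OF cont_F']) auto

lemma has_vector_derivative_scaleR_F_comp:
  assumes "(g has_real_derivative g') (at x within S)" "(h has_real_derivative h') (at x within S)"
    and "g x \<in> {-r..r}"
  shows "((\<lambda>x. h x *\<^sub>R F (g x)) has_vector_derivative ((h x * g') *\<^sub>R F' (g x) + h' *\<^sub>R F (g x)))
           (at x within S)"
proof -
  have "(F has_vector_derivative F' (g x)) (at (g x) within g ` S)"
    using deriv_F[OF assms(3)] has_vector_derivative_at_within by blast
  from vector_diff_chain_within[OF assms(1)[unfolded has_real_derivative_iff_has_vector_derivative] this]
  have "((\<lambda>x. F (g x)) has_vector_derivative (g' *\<^sub>R F' (g x))) (at x within S)"
    by (simp add: o_def)
  from has_vector_derivative_scaleR[OF assms(2) this]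
  show ?thesis by (simp add: algebra_simps)
qed

lemma continuous_on_F_sph_inner:
  assumes "a1^2 + a2^2 + a3^2 = r^2"
  shows "continuous_on S (\<lambda>p. F (sph_inner a1 a2 a3 (fst p) (snd p)))"
  using sph_inner_bounded[OF assms] r_pos by (intro continuous_on_F_comp continuous_on_sph_inner) auto

lemma continuous_on_F'_sph_inner:
  assumes "a1^2 + a2^2 + a3^2 = r^2"
  shows "continuous_on S (\<lambda>p. F' (sph_inner a1 a2 a3 (fst p) (snd p)))"
  using sph_inner_bounded[OF assms] r_pos by (intro continuous_on_F'_comp continuous_on_sph_inner) auto

definition ridge_integral :: "real \<Rightarrow> real \<Rightarrow> real \<Rightarrow> 'a" where
  "ridge_integral a1 a2 a3 =
     integral (cbox (0,0) (pi, 2*pi)) (\<lambda>p. sin (fst p) *\<^sub>R F (sph_inner a1 a2 a3 (fst p) (snd p)))"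

lemma continuous_on_ridge_integrand:
  assumes "a1^2 + a2^2 + a3^2 = r^2"
  shows "continuous_on S (\<lambda>p. sin (fst p) *\<^sub>R F (sph_inner a1 a2 a3 (fst p) (snd p)))"
  by (intro continuous_intros continuous_on_F_sph_inner[OF assms])

lemma integral_azimuthal_derivative_eq_0:
  assumes a: "a1^2 + a2^2 + a3^2 = r^2"
  shows "integral (cbox (0,0) (pi, 2*pi))
    (\<lambda>p. (sin (fst p) * sph_inner (- a2) a1 0 (fst p) (snd p)) *\<^sub>R F' (sph_inner a1 a2 a3 (fst p) (snd p))) = 0"
proof -
  have "integral (cbox (0,0) (pi, 2*pi))
      (\<lambda>(t,u). 0 + (sin t * sph_inner (- a2) a1 0 t u) *\<^sub>R F' (sph_inner a1 a2 a3 t u)) = 0"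
  proof (rule integral_box_divergence_eq_0[where P="\<lambda>t u. 0" and Q="\<lambda>t u. - sin t *\<^sub>R F (sph_inner a1 a2 a3 t u)"])
    show "continuous_on (cbox (0,0) (pi, 2*pi))
        (\<lambda>(t,u). (sin t * sph_inner (- a2) a1 0 t u) *\<^sub>R F' (sph_inner a1 a2 a3 t u))"
      unfolding split_def by (intro continuous_intros continuous_on_sph_inner continuous_on_F'_sph_inner[OF a])
    show "((\<lambda>u. - sin t *\<^sub>R F (sph_inner a1 a2 a3 t u)) has_vector_derivative
        (sin t * sph_inner (- a2) a1 0 t u) *\<^sub>R F' (sph_inner a1 a2 a3 t u)) (at u within {0..2*pi})" for t u
    proof -
      have g: "((\<lambda>u. sph_inner a1 a2 a3 t u) has_real_derivative - sph_inner (- a2) a1 0 t u)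
          (at u within {0..2*pi})"
        unfolding sph_inner_def by (auto intro!: derivative_eq_intros simp: algebra_simps)
      have h: "((\<lambda>u. - sin t) has_real_derivative 0) (at u within {0..2*pi})"
        by simp
      have "sph_inner a1 a2 a3 t u \<in> {-r..r}"
        using sph_inner_bounded[OF a] r_pos by simp
      from has_vector_derivative_scaleR_F_comp[OF g h this] show ?thesis by simp
    qed
  qed (simp_all add: sph_inner_def)
  then show ?thesis by (simp add: split_def)
qed

lemma integral_polar_derivative_eq_0:
  assumes a: "a1^2 + a3^2 = r^2"
  shows "integral (cbox (0,0) (pi, 2*pi))
    (\<lambda>p. (sin (fst p) * sph_inner a3 0 (- a1) (fst p) (snd p)) *\<^sub>R F' (sph_inner a1 0 a3 (fst p) (snd p))) = 0"
proof -
  have a': "a1^2 + 0^2 + a3^2 = r^2" using a by simp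
  have bounded: "\<And>t u. sph_inner a1 0 a3 t u \<in> {-r..r}"
    using sph_inner_bounded[OF a'] r_pos by simp
  define P' where "P' t u = (- (sin t * cos u) * (a1 * cos t * cos u - a3 * sin t)) *\<^sub>R F' (sph_inner a1 0 a3 t u)
      + (- (cos t * cos u)) *\<^sub>R F (sph_inner a1 0 a3 t u)" for t u
  define Q' where "Q' t u = (cos t * sin u * (- a1 * sin t * sin u)) *\<^sub>R F' (sph_inner a1 0 a3 t u)
      + (cos t * cos u) *\<^sub>R F (sph_inner a1 0 a3 t u)" for t u
  have sum_eq: "P' t u + Q' t u = (sin t * sph_inner a3 0 (- a1) t u) *\<^sub>R F' (sph_inner a1 0 a3 t u)" for t u
  proof -
    have sin2: "sin u * sin u = 1 - cos u * cos u"
      using sin_cos_squared_add[of u] by (simp add: power2_eq_square)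
    have "- (sin t * cos u) * (a1 * cos t * cos u - a3 * sin t) + cos t * sin u * (- a1 * sin t * sin u)
        = sin t * sph_inner a3 0 (- a1) t u"
      by (simp add: sph_inner_def sin2 algebra_simps)
    then show ?thesis
      unfolding P'_def Q'_def by (simp add: algebra_simps flip: scaleR_add_left)
  qed
  have "integral (cbox (0,0) (pi, 2*pi)) (\<lambda>(t,u). P' t u + Q' t u) = 0"
  proof (rule integral_box_divergence_eq_0[where P="\<lambda>t u. - (sin t * cos u) *\<^sub>R F (sph_inner a1 0 a3 t u)"
        and Q="\<lambda>t u. (cos t * sin u) *\<^sub>R F (sph_inner a1 0 a3 t u)"])
    show "continuous_on (cbox (0,0) (pi, 2*pi)) (\<lambda>(t,u). P' t u)"
      unfolding split_def P'_def
      by (intro continuous_intros continuous_on_F'_sph_inner[OF a'] continuous_on_F_sph_inner[OF a'])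
    show "continuous_on (cbox (0,0) (pi, 2*pi)) (\<lambda>(t,u). Q' t u)"
      unfolding split_def Q'_def
      by (intro continuous_intros continuous_on_F'_sph_inner[OF a'] continuous_on_F_sph_inner[OF a'])
    show "((\<lambda>t. - (sin t * cos u) *\<^sub>R F (sph_inner a1 0 a3 t u)) has_vector_derivative P' t u)
        (at t within {0..pi})" for t u
    proof -
      have g: "((\<lambda>t. sph_inner a1 0 a3 t u) has_real_derivative (a1 * cos t * cos u - a3 * sin t))
          (at t within {0..pi})"
        unfolding sph_inner_def by (auto intro!: derivative_eq_intros)
      have h: "((\<lambda>t. - (sin t * cos u)) has_real_derivative (- (cos t * cos u))) (at t within {0..pi})"
        by (auto intro!: derivative_eq_intros)
      from has_vector_derivative_scaleR_F_comp[OF g h bounded] show ?thesis by (simp add: P'_def)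
    qed
    show "((\<lambda>u. (cos t * sin u) *\<^sub>R F (sph_inner a1 0 a3 t u)) has_vector_derivative Q' t u)
        (at u within {0..2*pi})" for t u
    proof -
      have g: "((\<lambda>u. sph_inner a1 0 a3 t u) has_real_derivative (- a1 * sin t * sin u))
          (at u within {0..2*pi})"
        unfolding sph_inner_def by (auto intro!: derivative_eq_intros)
      have h: "((\<lambda>u. cos t * sin u) has_real_derivative (cos t * cos u)) (at u within {0..2*pi})"
        by (auto intro!: derivative_eq_intros)
      from has_vector_derivative_scaleR_F_comp[OF g h bounded] show ?thesis by (simp add: Q'_def mult.assoc)
    qed
  qed simp_all
  then show ?thesis by (simp add: split_def sum_eq)
qed

lemma ridge_integral_has_vector_derivative:
  fixes a1 a2 a3 a1' a2' a3' :: "real \<Rightarrow> real"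
  assumes on_sphere: "\<And>s. (a1 s)^2 + (a2 s)^2 + (a3 s)^2 = r^2"
    and deriv: "\<And>s. (a1 has_real_derivative a1' s) (at s)" "\<And>s. (a2 has_real_derivative a2' s) (at s)"
      "\<And>s. (a3 has_real_derivative a3' s) (at s)"
    and cont: "continuous_on UNIV a1'" "continuous_on UNIV a2'" "continuous_on UNIV a3'"
  shows "((\<lambda>s. ridge_integral (a1 s) (a2 s) (a3 s)) has_vector_derivative
           integral (cbox (0,0) (pi, 2*pi)) (\<lambda>p. (sin (fst p) * sph_inner (a1' s) (a2' s) (a3' s) (fst p) (snd p))
             *\<^sub>R F' (sph_inner (a1 s) (a2 s) (a3 s) (fst p) (snd p)))) (at s)"
proof -
  let ?c = "\<lambda>s p. sph_inner (a1 s) (a2 s) (a3 s) (fst p) (snd p)"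
  define f where "f s p = sin (fst p) *\<^sub>R F (?c s p)" for s p
  define f' where "f' s p = (sin (fst p) * sph_inner (a1' s) (a2' s) (a3' s) (fst p) (snd p)) *\<^sub>R F' (?c s p)"
    for s p
  have bounded: "sph_inner (a1 s) (a2 s) (a3 s) t u \<in> {-r..r}" for s t u
    using sph_inner_bounded[OF on_sphere] r_pos by simp
  have "((\<lambda>s. integral (cbox (0,0) (pi, 2*pi)) (f s)) has_vector_derivative
      integral (cbox (0,0) (pi, 2*pi)) (f' s)) (at s within UNIV)"
  proof (rule leibniz_rule_vector_derivative)
    fix s :: real and p :: "real \<times> real"
    have g: "((\<lambda>s. ?c s p) has_real_derivative sph_inner (a1' s) (a2' s) (a3' s) (fst p) (snd p)) (at s within UNIV)"
      unfolding sph_inner_def by (auto intro!: derivative_eq_intros deriv)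
    have h: "((\<lambda>s. sin (fst p)) has_real_derivative 0) (at s within UNIV)" by simp
    from has_vector_derivative_scaleR_F_comp[OF g h bounded]
    show "((\<lambda>s. f s p) has_vector_derivative f' s p) (at s within UNIV)"
      by (simp add: f_def f'_def)
  next
    show "f s integrable_on cbox (0,0) (pi, 2*pi)" for s
      unfolding f_def by (rule integrable_continuous[OF continuous_on_ridge_integrand[OF on_sphere]])
  next
    let ?S = "UNIV \<times> cbox (0,0) (pi, 2*pi) :: (real \<times> real \<times> real) set"
    have cont_comp: "continuous_on ?S (\<lambda>x. g (fst x))" if "continuous_on UNIV g" for g :: "real \<Rightarrow> real"
      by (rule continuous_on_compose2[OF that continuous_on_fst]) auto
    have cont_a: "continuous_on UNIV a1" "continuous_on UNIV a2" "continuous_on UNIV a3"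
      using deriv by (auto intro!: continuous_at_imp_continuous_on DERIV_isCont)
    have "continuous_on ?S (\<lambda>x. ?c (fst x) (snd x))"
      unfolding sph_inner_def by (intro continuous_intros cont_comp cont_a)
    then have "continuous_on ?S (\<lambda>x. F' (?c (fst x) (snd x)))"
      by (rule continuous_on_F'_comp) (rule bounded)
    then show "continuous_on ?S (\<lambda>(s,p). f' s p)"
      unfolding f'_def split_def sph_inner_def by (intro continuous_intros cont_comp cont)
  qed auto
  then show ?thesis unfolding ridge_integral_def f_def f'_def by simp
qed

lemma ridge_integral_azimuthal_derivative:
  "((\<lambda>\<beta>. ridge_integral (r * sin \<alpha> * cos \<beta>) (r * sin \<alpha> * sin \<beta>) (r * cos \<alpha>)) has_vector_derivative 0) (at \<beta>)"
proof -
  have "((\<lambda>\<beta>. ridge_integral (r * sin \<alpha> * cos \<beta>) (r * sin \<alpha> * sin \<beta>) (r * cos \<alpha>)) has_vector_derivative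
      integral (cbox (0,0) (pi, 2*pi)) (\<lambda>p. (sin (fst p) * sph_inner (- (r * sin \<alpha> * sin \<beta>)) (r * sin \<alpha> * cos \<beta>) 0
        (fst p) (snd p)) *\<^sub>R F' (sph_inner (r * sin \<alpha> * cos \<beta>) (r * sin \<alpha> * sin \<beta>) (r * cos \<alpha>) (fst p) (snd p))))
      (at \<beta>)"
    by (rule ridge_integral_has_vector_derivative)
      (auto intro!: derivative_eq_intros continuous_intros simp: spherical_coordinates_sum_squares)
  then show ?thesis
    by (simp only: integral_azimuthal_derivative_eq_0[OF spherical_coordinates_sum_squares])
qed

lemma ridge_integral_polar_derivative:
  "((\<lambda>\<alpha>. ridge_integral (r * sin \<alpha>) 0 (r * cos \<alpha>)) has_vector_derivative 0) (at \<alpha>)"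
proof -
  have on_circle: "(r * sin \<alpha>)^2 + (r * cos \<alpha>)^2 = r^2" for \<alpha>
    using spherical_coordinates_sum_squares[of r _ 0] by simp
  have "((\<lambda>\<alpha>. ridge_integral (r * sin \<alpha>) 0 (r * cos \<alpha>)) has_vector_derivative
      integral (cbox (0,0) (pi, 2*pi)) (\<lambda>p. (sin (fst p) * sph_inner (r * cos \<alpha>) 0 (- (r * sin \<alpha>)) (fst p) (snd p))
        *\<^sub>R F' (sph_inner (r * sin \<alpha>) 0 (r * cos \<alpha>) (fst p) (snd p)))) (at \<alpha>)"
    by (rule ridge_integral_has_vector_derivative)
      (auto intro!: derivative_eq_intros continuous_intros simp: on_circle)
  then show ?thesis
    by (simp only: integral_polar_derivative_eq_0[OF on_circle])
qed

lemma ridge_integral_rotation_invariant: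
  assumes "a1^2 + a2^2 + a3^2 = r^2"
  shows "ridge_integral a1 a2 a3 = ridge_integral 0 0 r"
proof -
  have zero_derivative_const: "K s = K s'" if "\<And>s. (K has_vector_derivative 0) (at s)" for K :: "real \<Rightarrow> 'a" and s s'
    using has_derivative_zero_unique[of UNIV K] that by (simp add: has_vector_derivative_def)
  obtain \<alpha> \<beta> where a: "a1 = r * sin \<alpha> * cos \<beta>" "a2 = r * sin \<alpha> * sin \<beta>" "a3 = r * cos \<alpha>"
    using spherical_coordinates_exist[OF assms r_pos] by blast
  have "ridge_integral a1 a2 a3 = ridge_integral (r * sin \<alpha> * cos 0) (r * sin \<alpha> * sin 0) (r * cos \<alpha>)"
    unfolding a by (rule zero_derivative_const[OF ridge_integral_azimuthal_derivative])
  also have "\<dots> = ridge_integral (r * sin \<alpha>) 0 (r * cos \<alpha>)" by simp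
  also have "\<dots> = ridge_integral (r * sin 0) 0 (r * cos 0)"
    by (rule zero_derivative_const[OF ridge_integral_polar_derivative])
  finally show ?thesis by simp
qed

lemma ridge_integral_pole:
  assumes "\<And>c. c \<in> {-r..r} \<Longrightarrow> (G has_vector_derivative F c) (at c within {-r..r})"
  shows "ridge_integral 0 0 r = (2*pi/r) *\<^sub>R (G r - G (-r))"
proof -
  have "ridge_integral 0 0 r
      = integral (cbox 0 pi) (\<lambda>t. integral (cbox 0 (2*pi)) (\<lambda>u. sin t *\<^sub>R F (sph_inner 0 0 r t u)))"
    unfolding ridge_integral_def
    using integral_prod_continuous[OF continuous_on_ridge_integrand[of 0 0 r]] by simp
  also have "\<dots> = integral {0..pi} (\<lambda>t. (2*pi) *\<^sub>R (sin t *\<^sub>R F (r * cos t)))"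
    by (simp add: sph_inner_polar_axis mult.commute)
  also have "\<dots> = (2*pi) *\<^sub>R integral {0..pi} (\<lambda>t. sin t *\<^sub>R F (r * cos t))"
    by (rule integral_cmul)
  also have "\<dots> = (2*pi) *\<^sub>R ((1/r) *\<^sub>R (G r - G (-r)))"
    using has_integral_sin_mult_comp_cos[OF r_pos assms] by (simp add: integral_unique)
  finally show ?thesis by simp
qed

lemma has_integral_ridge:
  fixes x :: "real^3"
  assumes "\<And>c. c \<in> {-r..r} \<Longrightarrow> (G has_vector_derivative F c) (at c within {-r..r})"
    and "norm x = r"
  shows "((\<lambda>p. sin (fst p) *\<^sub>R F (inner x (sph 1 p))) has_integral ((2*pi/r) *\<^sub>R (G r - G (-r))))
           (cbox (0,0) (pi, 2*pi))"
proof -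
  have on_sphere: "(x$1)^2 + (x$2)^2 + (x$3)^2 = r^2"
    using power2_norm_eq_inner[of x] assms(2) unfolding inner_vec_def sum_3 by (simp add: power2_eq_square)
  have "((\<lambda>p. sin (fst p) *\<^sub>R F (sph_inner (x$1) (x$2) (x$3) (fst p) (snd p)))
      has_integral ridge_integral (x$1) (x$2) (x$3)) (cbox (0,0) (pi, 2*pi))"
    unfolding ridge_integral_def
    by (rule integrable_integral[OF integrable_continuous[OF continuous_on_ridge_integrand[OF on_sphere]]])
  then show ?thesis
    using ridge_integral_rotation_invariant[OF on_sphere] ridge_integral_pole[OF assms(1)]
    by (simp add: inner_sph1)
qed

end

lemma has_sphere_integral_ridge:
  fixes x :: "real^3" and F F' G :: "real \<Rightarrow> 'a::euclidean_space" and f :: "real^3 \<Rightarrow> 'a"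
  assumes "norm x > 0"
    and "\<And>c. c \<in> {-norm x..norm x} \<Longrightarrow> (F has_vector_derivative F' c) (at c)"
    and "continuous_on {-norm x..norm x} F'"
    and "\<And>c. c \<in> {-norm x..norm x} \<Longrightarrow> (G has_vector_derivative F c) (at c within {-norm x..norm x})"
    and f: "\<And>p. f (sph R p) = F (inner x (sph 1 p))"
  shows "has_sphere_integral f ((R^2 * (2*pi/norm x)) *\<^sub>R (G (norm x) - G (- norm x))) R"
  using has_integral_cmul[OF has_integral_ridge[OF assms(1-4) refl], of "R^2"]
  unfolding has_sphere_integral_def f by (simp add: scaleR_scaleR)

lemma sph_eq_scaleR: "sph R p = R *\<^sub>R sph 1 p"
  unfolding sph_def by (simp add: vec_eq_iff forall_3 vector_3)

lemma norm_sph1 [simp]: "norm (sph 1 p) = 1"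
proof -
  have "(norm (sph 1 p))^2 = 1"
    unfolding power2_norm_eq_inner inner_vec_def sum_3 sph_def
    using spherical_coordinates_sum_squares[of 1 "fst p" "snd p"] by (simp add: power2_eq_square)
  then show ?thesis using norm_ge_zero[of "sph 1 p"] by (auto simp: power2_eq_1_iff)
qed

definition sq_dist_sphere :: "real \<Rightarrow> real \<Rightarrow> real \<Rightarrow> real" where
  "sq_dist_sphere R r c = r^2 + R^2 - 2 * R * c"

lemma norm_diff_sph_power2:
  "(norm (x - sph R p))^2 = sq_dist_sphere R (norm x) (inner x (sph 1 p))"
proof -
  have "(norm (x - sph R p))^2 = inner (x - R *\<^sub>R sph 1 p) (x - R *\<^sub>R sph 1 p)"
    unfolding sph_eq_scaleR[of R p] by (rule power2_norm_eq_inner)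
  also have "\<dots> = inner x x - 2 * R * inner x (sph 1 p) + R^2 * inner (sph 1 p) (sph 1 p)"
    by (simp add: inner_diff_left inner_diff_right inner_commute power2_eq_square algebra_simps)
  finally show ?thesis
    by (simp add: sq_dist_sphere_def power2_norm_eq_inner[symmetric])
qed

lemma omega_sph:
  assumes "0 \<le> R"
  shows "omega x (sph R p) = \<bar>R^2 - (norm x)^2\<bar> / sq_dist_sphere R (norm x) (inner x (sph 1 p))"
proof -
  have "norm (sph R p) = R"
    using assms by (simp add: sph_eq_scaleR[of R p])
  then show ?thesis
    unfolding omega_def norm_diff_sph_power2[symmetric] by (simp add: abs_divide abs_minus_commute)
qed

lemma sq_dist_sphere_pos:
  assumes "0 \<le> R" "r \<noteq> R" "c \<le> r"
  shows "sq_dist_sphere R r c > 0"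
proof -
  have "sq_dist_sphere R r c = (R - r)^2 + 2 * R * (r - c)"
    unfolding sq_dist_sphere_def by (simp add: power2_eq_square algebra_simps)
  moreover have "(R - r)^2 > 0" using assms(2) by simp
  ultimately show ?thesis using assms(1,3) by (smt (verit) mult_nonneg_nonneg)
qed

lemma has_real_derivative_sq_dist_sphere:
  "(sq_dist_sphere R r has_real_derivative (- 2 * R)) (at c within S)"
  unfolding sq_dist_sphere_def[abs_def] by (auto intro!: derivative_eq_intros)

lemma has_real_derivative_divide_sq_dist_sphere:
  assumes "sq_dist_sphere R r c \<noteq> 0"
  shows "((\<lambda>c. k / sq_dist_sphere R r c) has_real_derivative (2 * R * k / (sq_dist_sphere R r c)^2)) (at c)"
  using assms unfolding sq_dist_sphere_def
  by (auto intro!: derivative_eq_intros simp: power2_eq_square field_simps)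

lemma omega_ratio_extremes:
  assumes "R > 0" "r > 0" "r \<noteq> R"
  shows "\<bar>R^2 - r^2\<bar> / sq_dist_sphere R r r = (R + r) / \<bar>R - r\<bar>"
    and "\<bar>R^2 - r^2\<bar> / sq_dist_sphere R r (-r) = \<bar>R - r\<bar> / (R + r)"
proof -
  have "R^2 - r^2 = (R - r) * (R + r)" by (simp add: power2_eq_square algebra_simps)
  then have k: "\<bar>R^2 - r^2\<bar> = \<bar>R - r\<bar> * (R + r)" using assms by (simp add: abs_mult)
  have "sq_dist_sphere R r r = \<bar>R - r\<bar> * \<bar>R - r\<bar>" "sq_dist_sphere R r (-r) = (R + r) * (R + r)"
    unfolding sq_dist_sphere_def by (simp_all add: power2_eq_square algebra_simps)
  then show "\<bar>R^2 - r^2\<bar> / sq_dist_sphere R r r = (R + r) / \<bar>R - r\<bar>"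
    and "\<bar>R^2 - r^2\<bar> / sq_dist_sphere R r (-r) = \<bar>R - r\<bar> / (R + r)"
    unfolding k using assms by (simp_all del: abs_mult_self_eq)
qed

lemma ln_omega_ratio_extremes:
  assumes "R > 0" "r > 0" "r \<noteq> R"
  shows "ln (\<bar>R^2 - r^2\<bar> / sq_dist_sphere R r r) = ln ((R + r) / \<bar>R - r\<bar>)"
    and "ln (\<bar>R^2 - r^2\<bar> / sq_dist_sphere R r (-r)) = - ln ((R + r) / \<bar>R - r\<bar>)"
  using assms by (simp_all add: omega_ratio_extremes ln_div)

lemma exp_Complex_1_mult_ln:
  assumes "a > 0"
  shows "exp (Complex 1 b * of_real (ln a)) = of_real a * cis (b * ln a)"
proof -
  have "Complex 1 b * of_real (ln a) = Complex (ln a) (b * ln a)" by (simp add: complex_eq_iff)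
  then show ?thesis using assms by (simp add: exp_eq_polar)
qed

lemma has_sphere_integral_omega:
  fixes R :: real and x :: "real^3"
  assumes R: "R > 0" and x: "norm x > 0" "norm x \<noteq> R"
  shows "has_sphere_integral (omega x)
           ((2 * pi * R / norm x) * \<bar>R^2 - (norm x)^2\<bar> * ln ((R + norm x) / \<bar>R - norm x\<bar>)) R"
proof -
  define r where "r = norm x"
  define k where "k = \<bar>R^2 - r^2\<bar>"
  define D where "D c = sq_dist_sphere R r c" for c
  define L where "L = ln ((R + r) / \<bar>R - r\<bar>)"
  have r: "r > 0" "r \<noteq> R" using x by (simp_all add: r_def)
  have k: "k > 0" using r R power2_eq_iff_nonneg[of R r] by (simp add: k_def)
  have D_pos: "D c > 0" if "c \<in> {-r..r}" for c
    using sq_dist_sphere_pos[of R r c] R r that by (simp add: D_def)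
  define F where "F c = k / D c" for c
  define F' where "F' c = 2 * R * k / (D c)^2" for c
  define G where "G c = - (k / (2 * R)) * ln (D c)" for c
  have reduced: "has_sphere_integral (omega x) ((R^2 * (2*pi/r)) *\<^sub>R (G r - G (-r))) R"
  proof (rule has_sphere_integral_ridge[where x=x and F=F and F'=F', folded r_def])
    show "(F has_vector_derivative F' c) (at c)" if "c \<in> {-r..r}" for c
      using has_real_derivative_divide_sq_dist_sphere[of R r c k] D_pos[OF that]
      unfolding has_real_derivative_iff_has_vector_derivative F_def F'_def D_def by simp
    show "continuous_on {-r..r} F'"
      using D_pos unfolding F'_def D_def sq_dist_sphere_def
      by (intro continuous_intros) force+
    show "(G has_vector_derivative F c) (at c within {-r..r})" if "c \<in> {-r..r}" for c
    proof -
      have "((\<lambda>c. -(k / (2*R)) * ln (D c)) has_real_derivative (-(k / (2*R)) * (1 / D c * (-2*R))))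
          (at c within {-r..r})"
        unfolding D_def
        by (intro DERIV_cmult DERIV_chain2[OF DERIV_ln_divide has_real_derivative_sq_dist_sphere])
          (use D_pos[OF that] in \<open>simp add: D_def\<close>)
      moreover have "-(k / (2*R)) * (1 / D c * (-2*R)) = F c"
        unfolding F_def using R D_pos[OF that] by (simp add: field_simps)
      ultimately show ?thesis
        unfolding has_real_derivative_iff_has_vector_derivative[symmetric] G_def by simp
    qed
    show "omega x (sph R p) = F (inner x (sph 1 p))" for p
      unfolding F_def D_def k_def r_def using R by (simp add: omega_sph)
  qed (use r in simp)
  have G_diff: "G r - G (-r) = (k / R) * L"
  proof -
    have "ln (D (-r)) - ln (D r) = ln (k / D r) - ln (k / D (-r))"
      using k D_pos[of r] D_pos[of "-r"] r by (simp add: ln_div)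
    also have "\<dots> = 2 * L"
      using ln_omega_ratio_extremes[OF R r] by (simp add: k_def D_def L_def)
    finally show ?thesis unfolding G_def using R by (simp add: field_simps)
  qed
  have integral_value: "(R^2 * (2*pi/r)) *\<^sub>R (G r - G (-r)) = (2 * pi * R / r) * k * L"
    unfolding G_diff using R r by (simp add: power2_eq_square field_simps)
  show ?thesis using reduced unfolding integral_value unfolding r_def k_def L_def .
qed

lemma has_sphere_integral_omega_cpow:
  fixes R b :: real and x :: "real^3"
  assumes R: "R > 0" and x: "norm x > 0" "norm x \<noteq> R" and b: "b \<noteq> 0"
  shows "has_sphere_integral (omega_cpow b x)
           (of_real ((2 * pi * R / norm x) * (\<bar>R^2 - (norm x)^2\<bar> / b) *
              sin (b * ln ((R + norm x) / \<bar>R - norm x\<bar>)))) R"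
proof -
  define r where "r = norm x"
  define k where "k = \<bar>R^2 - r^2\<bar>"
  define D where "D c = sq_dist_sphere R r c" for c
  define L where "L = ln ((R + r) / \<bar>R - r\<bar>)"
  have r: "r > 0" "r \<noteq> R" using x by (simp_all add: r_def)
  have k: "k > 0" using r R power2_eq_iff_nonneg[of R r] by (simp add: k_def)
  have D_pos: "D c > 0" if "c \<in> {-r..r}" for c
    using sq_dist_sphere_pos[of R r c] R r that by (simp add: D_def)
  define z where "z = Complex 1 b"
  define F where "F c = exp (z * of_real (ln (k / D c)))" for c
  define F' where "F' c = of_real (2 * R / D c) * (F c * z)" for c
  define C where "C = 1 / (2 * \<i> * of_real R * of_real b :: complex)"
  define G where "G c = F c * of_real (D c) * C" for c
  have deriv_F: "(F has_vector_derivative F' c) (at c)" if "c \<in> {-r..r}" for c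
  proof -
    have "((\<lambda>c. ln (k / D c)) has_real_derivative (1 / (k / D c) * (2 * R * k / (D c)^2))) (at c)"
      using D_pos[OF that] k unfolding D_def
      by (intro DERIV_chain2[OF DERIV_ln_divide has_real_derivative_divide_sq_dist_sphere]) auto
    moreover have "1 / (k / D c) * (2 * R * k / (D c)^2) = 2 * R / D c"
      using D_pos[OF that] k by (simp add: power2_eq_square field_simps)
    ultimately have ln: "((\<lambda>c. ln (k / D c)) has_real_derivative (2 * R / D c)) (at c)"
      by simp
    have exp: "((\<lambda>w. exp (z * w)) has_field_derivative (exp (z * of_real (ln (k / D c))) * z))
        (at (of_real (ln (k / D c))))"
      by (auto intro!: derivative_eq_intros)
    from field_vector_diff_chain_at[OF has_vector_derivative_of_real[OF ln] exp]
    show ?thesis unfolding F_def F'_def by (simp add: o_def)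
  qed
  have reduced: "has_sphere_integral (omega_cpow b x) ((R^2 * (2*pi/r)) *\<^sub>R (G r - G (-r))) R"
  proof (rule has_sphere_integral_ridge[where x=x and F=F and F'=F', folded r_def])
    show "(F has_vector_derivative F' c) (at c)" if "c \<in> {-r..r}" for c
      by (rule deriv_F[OF that])
    show "continuous_on {-r..r} F'"
      using D_pos k unfolding F'_def F_def D_def sq_dist_sphere_def
      by (intro continuous_intros) force+
    show "(G has_vector_derivative F c) (at c within {-r..r})" if "c \<in> {-r..r}" for c
    proof -
      have "(D has_real_derivative (-2*R)) (at c within {-r..r})"
        unfolding D_def[abs_def] by (rule has_real_derivative_sq_dist_sphere)
      from has_vector_derivative_mult_left[OF has_vector_derivative_mult[OF
            has_vector_derivative_at_within[OF deriv_F[OF that]] has_vector_derivative_of_real[OF this]], of C]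
      have "(G has_vector_derivative ((F c * of_real (-2*R) + F' c * of_real (D c)) * C)) (at c within {-r..r})"
        unfolding G_def by simp
      moreover have "F' c * of_real (D c) = of_real (2 * R) * (F c * z)"
        unfolding F'_def using D_pos[OF that] by (simp add: field_simps)
      then have "F c * of_real (-2*R) + F' c * of_real (D c) = F c * (2 * \<i> * of_real R * of_real b)"
        unfolding z_def by (simp add: complex_eq_iff algebra_simps)
      then have "(F c * of_real (-2*R) + F' c * of_real (D c)) * C = F c"
        unfolding C_def using R b by (simp add: field_simps)
      ultimately show ?thesis by simp
    qed
    show "omega_cpow b x (sph R p) = F (inner x (sph 1 p))" for p
      unfolding omega_cpow_def F_def D_def k_def r_def z_def using R by (simp add: omega_sph)
  qed (use r in simp)
  have G_diff: "G r - G (-r) = of_real (k * sin (b * L) / (R * b))"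
  proof -
    have F_polar: "F c = of_real (k / D c) * cis (b * ln (k / D c))" if "c \<in> {-r..r}" for c
      unfolding F_def z_def using k D_pos[OF that] by (simp add: exp_Complex_1_mult_ln)
    have "ln (k / D r) = L" "ln (k / D (-r)) = - L"
      using ln_omega_ratio_extremes[OF R r] by (simp_all add: k_def D_def L_def)
    then have extremes: "F r * of_real (D r) = of_real k * cis (b * L)"
        "F (-r) * of_real (D (-r)) = of_real k * cis (- (b * L))"
      using F_polar[of r] F_polar[of "-r"] D_pos[of r] D_pos[of "-r"] r by (simp_all add: field_simps)
    have "G r - G (-r) = (F r * of_real (D r) - F (-r) * of_real (D (-r))) * C"
      unfolding G_def by (simp add: algebra_simps)
    also have "\<dots> = of_real k * (2 * \<i> * of_real (sin (b * L))) * C"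
      unfolding extremes by (simp add: complex_eq_iff algebra_simps)
    also have "\<dots> = of_real (k * sin (b * L) / (R * b))"
      unfolding C_def using R b by (simp add: field_simps)
    finally show ?thesis .
  qed
  have integral_value: "(R^2 * (2*pi/r)) *\<^sub>R (G r - G (-r)) = of_real ((2 * pi * R / r) * (k / b) * sin (b * L))"
    unfolding G_diff scaleR_conv_of_real using R r b by (simp add: power2_eq_square field_simps)
  show ?thesis using reduced unfolding integral_value unfolding r_def k_def L_def .
qed

theorem corollary5:
  fixes R b :: real and x :: "real^3"
  assumes "R > 0" and "norm x > 0" and "norm x \<noteq> R" and "b \<noteq> 0"
  shows "has_sphere_integral (omega_cpow b x)
           (of_real ((2 * pi * R / norm x) * (\<bar>R^2 - (norm x)^2\<bar> / b) *
              sin (b * ln ((R + norm x) / \<bar>R - norm x\<bar>)))) R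
         \<and> has_sphere_integral (omega x)
           ((2 * pi * R / norm x) * \<bar>R^2 - (norm x)^2\<bar> *
              ln ((R + norm x) / \<bar>R - norm x\<bar>)) R"
  using has_sphere_integral_omega_cpow[OF assms] has_sphere_integral_omega[OF assms(1-3)] by blast

end
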